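(* Let $\mathbf{X}$ be a set of discrete random variables with sample space $\Omega(\mathbf{X})$, let $O$ be a positive unital circuit over $\mathbf{X}$ and let $\rho$ be a density matrix of the same size as $O(\mathbf{x})$. Then $p_{\mathbf{X}}(\mathbf{x})=\operatorname{Tr}[O(\mathbf{x})\rho]$ is a probability distribution on $\Omega(\mathbf{X})$, i.e. $p_{\mathbf{X}}(\mathbf{x})\ge 0$ for all $\mathbf{x}\in\Omega(\mathbf{X})$ and $\sum_{\mathbf{x}\in\Omega(\mathbf{X})}p_{\mathbf{X}}(\mathbf{x})=1$.
   Context: A density matrix is a PSD complex matrix of trace one. A POVM is a finite family of PSD matrices summing to the identity. A quantum operation from $d\times d$ to $d'\times d'$ matrices is $\Phi(A)=\sum_j K_jAK_j^*$ with $d'\times d$ matrices $K_j$, $\sum_jK_j^*K_j\le\mathbb{1}$ (Loewner order); it is unital if $\Phi(\mathbb{1}_d)=\mathbb{1}_{d'}$. A partition circuit over $\mathbf{X}=\{X_0,\dots,X_{N-1}\}$ is a rooted binary tree whose leaves are in bijection with the variables (leaf $k$ carries $X_k$ with finite sample space $\Omega(X_k)$), each internal unit $k$ having two children $k_l,k_r$; $\mathbf{x}_k$ denotes an assignment to the variables at the leaves below $k$. A positive unital circuit assigns to each leaf $k$ a POVM $\{E_{x_k}\}_{x_k\in\Omega(X_k)}$ and to each internal unit $k$ a unital quantum operation $\Phi_k$, and computes $O_k(\mathbf{x}_k)=E_{x_k}$ at leaves and $O_k(\mathbf{x}_k)=\Phi_k(O_{k_l}(\mathbf{x}_{k_l})\otimes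 O_{k_r}(\mathbf{x}_{k_r}))$ at internal units ($\otimes$ the Kronecker product); $O(\mathbf{x})=O_{\mathrm{root}}(\mathbf{x})$. *)

theory Defs
  imports "Jordan_Normal_Form.Matrix" "HOL-Library.Complex_Order" "HOL-Library.FuncSet"
begin

definition adj :: "complex mat \<Rightarrow> complex mat" where
  "adj A = mat (dim_col A) (dim_row A) (\<lambda>(i,j). cnj (A $$ (j,i)))"

definition psd :: "nat \<Rightarrow> complex mat \<Rightarrow> bool" where
  "psd n A \<longleftrightarrow> A \<in> carrier_mat n n \<and> (\<forall>v \<in> carrier_vec n. 0 \<le> cscalar_prod (A *\<^sub>v v) v)"

definition loewner_le :: "nat \<Rightarrow> complex mat \<Rightarrow> complex mat \<Rightarrow> bool" where
  "loewner_le n A B \<longleftrightarrow> A \<in> carrier_mat n n \<and> B \<in> carrier_mat n n \<and> psd n (B - A)"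

definition mtrace :: "complex mat \<Rightarrow> complex" where
  "mtrace A = (\<Sum>i<dim_row A. A $$ (i,i))"

definition density :: "nat \<Rightarrow> complex mat \<Rightarrow> bool" where
  "density n \<rho> \<longleftrightarrow> psd n \<rho> \<and> mtrace \<rho> = 1"

definition kron :: "complex mat \<Rightarrow> complex mat \<Rightarrow> complex mat" where
  "kron A B = mat (dim_row A * dim_row B) (dim_col A * dim_col B)
     (\<lambda>(i,j). A $$ (i div dim_row B, j div dim_col B) * B $$ (i mod dim_row B, j mod dim_col B))"

definition msum :: "nat \<Rightarrow> nat \<Rightarrow> ('i \<Rightarrow> complex mat) \<Rightarrow> 'i set \<Rightarrow> complex mat" where
  "msum n m f I = mat n m (\<lambda>(i,j). \<Sum>x\<in>I. f x $$ (i,j))"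

definition povm :: "nat \<Rightarrow> 'i set \<Rightarrow> ('i \<Rightarrow> complex mat) \<Rightarrow> bool" where
  "povm d S E \<longleftrightarrow> finite S \<and> (\<forall>x\<in>S. psd d (E x)) \<and> msum d d E S = 1\<^sub>m d"

definition qapply :: "nat \<Rightarrow> complex mat list \<Rightarrow> complex mat \<Rightarrow> complex mat" where
  "qapply d' Ks A = mat d' d' (\<lambda>(i,j). \<Sum>K\<leftarrow>Ks. (K * A * adj K) $$ (i,j))"

definition qop :: "nat \<Rightarrow> nat \<Rightarrow> complex mat list \<Rightarrow> bool" where
  "qop d d' Ks \<longleftrightarrow> (\<forall>K\<in>set Ks. K \<in> carrier_mat d' d) \<and>
     loewner_le d (mat d d (\<lambda>(i,j). \<Sum>K\<leftarrow>Ks. (adj K * K) $$ (i,j))) (1\<^sub>m d)"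

definition unital_qop :: "nat \<Rightarrow> nat \<Rightarrow> complex mat list \<Rightarrow> bool" where
  "unital_qop d d' Ks \<longleftrightarrow> qop d d' Ks \<and> qapply d' Ks (1\<^sub>m d) = 1\<^sub>m d'"

text \<open>Variables are X_0..X_{N-1}, identified with their indices; values are naturals.
  A leaf stores its variable index k, its matrix dimension d and its POVM (value \<Rightarrow> matrix).
  An internal unit stores its output dimension d' and Kraus operators.\<close>
datatype circ =
    CLeaf nat nat "nat \<Rightarrow> complex mat"
  | CNode nat "complex mat list" circ circ

fun cdim :: "circ \<Rightarrow> nat" where
  "cdim (CLeaf k d E) = d"
| "cdim (CNode d Ks l r) = d"

fun leaves :: "circ \<Rightarrow> nat list" where
  "leaves (CLeaf k d E) = [k]"
| "leaves (CNode d Ks l r) = leaves l @ leaves r"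

fun pos_unital :: "(nat \<Rightarrow> nat set) \<Rightarrow> circ \<Rightarrow> bool" where
  "pos_unital \<Omega> (CLeaf k d E) = povm d (\<Omega> k) E"
| "pos_unital \<Omega> (CNode d Ks l r) =
     (pos_unital \<Omega> l \<and> pos_unital \<Omega> r \<and> unital_qop (cdim l * cdim r) d Ks)"

fun ceval :: "circ \<Rightarrow> (nat \<Rightarrow> nat) \<Rightarrow> complex mat" where
  "ceval (CLeaf k d E) x = E (x k)"
| "ceval (CNode d Ks l r) x = qapply d Ks (kron (ceval l x) (ceval r x))"

definition partition_circ :: "nat \<Rightarrow> circ \<Rightarrow> bool" where
  "partition_circ N C \<longleftrightarrow> distinct (leaves C) \<and> set (leaves C) = {..<N}"

end

theory Submission
  imports Defs
begin

text \<open>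
  Positivity: every \<open>O(x)\<close> is a finite sum of rank-one matrices \<open>v v\<^sup>*\<close>. POVM elements are
  positive semidefinite, hence of this form by a Cholesky-type elimination (pass to the Schur
  complement of a nonzero diagonal entry), and the form is preserved by Kronecker products and by
  Kraus maps \<open>M \<mapsto> \<Sum> K M K\<^sup>*\<close>. For such a matrix \<open>Tr[O(x) \<rho>] = \<Sum> v\<^sup>* \<rho> v \<ge> 0\<close>.

  Normalisation: in a partition circuit the sum of \<open>O(x)\<close> over all assignments factorises along
  the tree. At a leaf the POVM sums to \<open>1\<close>; at an internal unit the sum of Kronecker products is
  the Kronecker product \<open>1 \<otimes> 1 = 1\<close> of the sums, which the unital operation maps to \<open>1\<close>.
  Hence \<open>\<Sum>\<^sub>x Tr[O(x) \<rho>] = Tr \<rho> = 1\<close>.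
\<close>

section \<open>Positive semidefinite matrices and sums of outer products\<close>

definition qform :: "complex mat \<Rightarrow> nat \<Rightarrow> (nat \<Rightarrow> complex) \<Rightarrow> complex" where
  "qform A n w = (\<Sum>a<n. \<Sum>b<n. cnj (w a) * A $$ (a,b) * w b)"

lemma cscalar_prod_mult_mat_vec_eq_qform:
  assumes "A \<in> carrier_mat n n"
  shows "cscalar_prod (A *\<^sub>v vec n w) (vec n w) = qform A n w"
  using assms unfolding qform_def scalar_prod_def
  by (auto simp: scalar_prod_def atLeast0LessThan sum_distrib_left sum_distrib_right mult_ac
      intro!: sum.cong)

lemma psd_iff_qform: "psd n A \<longleftrightarrow> A \<in> carrier_mat n n \<and> (\<forall>w. 0 \<le> qform A n w)"
proof -
  have all_vec: "(\<forall>v \<in> carrier_vec n. P v) \<longleftrightarrow> (\<forall>w. P (vec n w))" for P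
    by (metis carrier_vecD eq_vecI index_vec vec_carrier dim_vec)
  show ?thesis
    unfolding psd_def by (subst all_vec) (auto simp: cscalar_prod_mult_mat_vec_eq_qform)
qed

lemma qform_update:
  assumes "i < n"
  shows "qform A n (w(i := w i + t)) = qform A n w + cnj t * (\<Sum>b<n. A $$ (i,b) * w b)
     + t * (\<Sum>a<n. cnj (w a) * A $$ (a,i)) + cnj t * t * A $$ (i,i)"
proof -
  have expand: "cnj ((w(i := w i + t)) a) * A $$ (a,b) * (w(i := w i + t)) b
      = cnj (w a) * A $$ (a,b) * w b + (if a = i then cnj t * (A $$ (i,b) * w b) else 0)
        + (if b = i then t * (cnj (w a) * A $$ (a,i)) else 0)
        + (if a = i then if b = i then cnj t * t * A $$ (i,i) else 0 else 0)" for a b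
    by (auto simp: algebra_simps)
  have if_out: "(\<Sum>b<n. if P then g b else 0) = (if P then \<Sum>b<n. g b else 0)"
    for P and g :: "nat \<Rightarrow> complex"
    by simp
  show ?thesis
    using assms unfolding qform_def expand sum.distrib if_out
    by (simp add: sum_distrib_left)
qed

lemma qform_unit:
  assumes "j < n"
  shows "qform A n ((\<lambda>_. 0)(j := 1)) = A $$ (j,j)"
proof -
  have "qform A n (\<lambda>_. 0) = 0"
    by (simp add: qform_def)
  then show ?thesis
    using qform_update[OF assms, of A "\<lambda>_. 0" 1] by simp
qed

lemma psd_diag_nonneg:
  assumes "psd n A" "j < n"
  shows "0 \<le> A $$ (j,j)"
proof -
  have "0 \<le> qform A n ((\<lambda>_. 0)(j := 1))"
    using assms(1) by (simp add: psd_iff_qform)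
  then show ?thesis
    by (simp add: qform_unit assms(2))
qed

lemma psd_two_point:
  assumes "psd n A" "i < n" "j < n"
  shows "0 \<le> A $$ (j,j) + cnj t * A $$ (i,j) + t * A $$ (j,i) + cnj t * t * A $$ (i,i)"
proof -
  define e :: "nat \<Rightarrow> complex" where "e = (\<lambda>_. 0)(j := 1)"
  have "(\<Sum>b<n. A $$ (i,b) * e b) = (\<Sum>b<n. if b = j then A $$ (i,b) else 0)"
    "(\<Sum>a<n. cnj (e a) * A $$ (a,i)) = (\<Sum>a<n. if a = j then A $$ (a,i) else 0)"
    by (intro sum.cong; simp add: e_def)+
  moreover have "qform A n e = A $$ (j,j)"
    unfolding e_def using assms(3) by (rule qform_unit)
  ultimately have "qform A n (e(i := e i + t))
      = A $$ (j,j) + cnj t * A $$ (i,j) + t * A $$ (j,i) + cnj t * t * A $$ (i,i)"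
    using assms(2,3) by (simp add: qform_update)
  moreover have "0 \<le> qform A n (e(i := e i + t))"
    using assms(1) by (simp add: psd_iff_qform)
  ultimately show ?thesis
    by simp
qed

lemma psd_hermitian:
  assumes "psd n A" "i < n" "j < n"
  shows "A $$ (j,i) = cnj (A $$ (i,j))"
proof -
  have diag: "Im (A $$ (i,i)) = 0" "Im (A $$ (j,j)) = 0"
    using psd_diag_nonneg[OF assms(1)] assms(2,3) by (auto simp: less_eq_complex_def)
  have "Im (A $$ (j,j) + A $$ (i,j) + A $$ (j,i) + A $$ (i,i)) = 0"
    using psd_two_point[OF assms, of 1] by (simp add: less_eq_complex_def)
  moreover have "Im (A $$ (j,j) - \<i> * A $$ (i,j) + \<i> * A $$ (j,i) + A $$ (i,i)) = 0"
    using psd_two_point[OF assms, of \<i>] by (simp add: less_eq_complex_def)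
  ultimately show ?thesis
    using diag by (simp add: complex_eq_iff)
qed

lemma psd_zero_diag_imp_zero_row:
  assumes "psd n A" "i < n" "j < n" "A $$ (i,i) = 0"
  shows "A $$ (i,j) = 0"
proof (rule ccontr)
  define b where "b = A $$ (i,j)"
  assume "A $$ (i,j) \<noteq> 0"
  then have b: "(cmod b)\<^sup>2 > 0"
    by (simp add: b_def)
  define t where "t = - complex_of_real ((Re (A $$ (j,j)) + 1) / (cmod b)\<^sup>2) * b"
  have "cnj b * b = complex_of_real ((cmod b)\<^sup>2)"
    by (metis complex_norm_square mult.commute)
  then have "cnj t * b = - complex_of_real (Re (A $$ (j,j)) + 1)"
    using b unfolding t_def by (simp add: field_simps)
  moreover have "0 \<le> A $$ (j,j) + cnj t * b + cnj (cnj t * b)"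
    using psd_two_point[OF assms(1-3), of t] psd_hermitian[OF assms(1-3)] assms(4)
    by (simp add: b_def mult.commute)
  ultimately have "0 \<le> Re (A $$ (j,j)) - 2 * (Re (A $$ (j,j)) + 1)"
    by (simp add: less_eq_complex_def)
  then show False
    using psd_diag_nonneg[OF assms(1,3)] by (simp add: less_eq_complex_def)
qed

definition schur_compl :: "nat \<Rightarrow> complex mat \<Rightarrow> nat \<Rightarrow> complex mat" where
  "schur_compl n A i = mat n n (\<lambda>(p,q). A $$ (p,q) - A $$ (p,i) * A $$ (i,q) / A $$ (i,i))"

lemma qform_schur_compl:
  "qform (schur_compl n A i) n w
     = qform A n w - (\<Sum>a<n. cnj (w a) * A $$ (a,i)) * (\<Sum>b<n. A $$ (i,b) * w b) / A $$ (i,i)"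
  unfolding qform_def schur_compl_def
  by (simp add: sum_distrib_left sum_distrib_right sum_subtractf algebra_simps
      diff_divide_distrib sum_divide_distrib)

lemma psd_schur_compl:
  assumes "psd n A" "i < n" "A $$ (i,i) \<noteq> 0"
  shows "psd n (schur_compl n A i)"
  unfolding psd_iff_qform
proof (intro conjI allI)
  fix w
  define a where "a = A $$ (i,i)"
  define b where "b = (\<Sum>q<n. A $$ (i,q) * w q)"
  have "cnj a = a"
    using psd_diag_nonneg[OF assms(1,2)] by (simp add: a_def less_eq_complex_def complex_eq_iff)
  have cnj_b: "(\<Sum>p<n. cnj (w p) * A $$ (p,i)) = cnj b"
    unfolding b_def cnj_sum using psd_hermitian[OF assms(1,2)] by (intro sum.cong) auto
  define t where "t = - b / a"
  have "0 \<le> qform A n (w(i := w i + t))"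
    using assms(1) by (simp add: psd_iff_qform)
  also have "\<dots> = qform A n w + cnj t * b + t * cnj b + cnj t * t * a"
    using qform_update[OF assms(2)] cnj_b by (simp add: a_def b_def)
  also have "\<dots> = qform A n w - cnj b * b / a"
    unfolding t_def using assms(3) \<open>cnj a = a\<close> by (simp add: a_def field_simps)
  also have "\<dots> = qform (schur_compl n A i) n w"
    using cnj_b by (simp add: qform_schur_compl a_def b_def)
  finally show "0 \<le> qform (schur_compl n A i) n w" .
qed (simp add: schur_compl_def)

lemma schur_compl_diag_support:
  assumes "psd n A" "i < n" "A $$ (i,i) \<noteq> 0"
  shows "{k. k < n \<and> schur_compl n A i $$ (k,k) \<noteq> 0} \<subseteq> {k. k < n \<and> A $$ (k,k) \<noteq> 0} - {i}"
proof -
  have "schur_compl n A i $$ (k,k) = 0" if "k < n" "k = i \<or> A $$ (k,k) = 0" for k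
    using that assms psd_zero_diag_imp_zero_row[OF assms(1) that(1) assms(2)]
    by (auto simp: schur_compl_def)
  then show ?thesis
    by blast
qed

definition outer_sum :: "nat \<Rightarrow> complex mat \<Rightarrow> bool" where
  "outer_sum n A \<longleftrightarrow> A \<in> carrier_mat n n \<and>
     (\<exists>vs. \<forall>i<n. \<forall>j<n. A $$ (i,j) = (\<Sum>v\<leftarrow>vs. v i * cnj (v j)))"

lemma outer_sum_from_schur_compl:
  assumes "psd n A" "i < n" "A $$ (i,i) \<noteq> 0" "outer_sum n (schur_compl n A i)"
  shows "outer_sum n A"
proof -
  obtain vs where vs: "\<And>p q. p < n \<Longrightarrow> q < n \<Longrightarrow>
      schur_compl n A i $$ (p,q) = (\<Sum>v\<leftarrow>vs. v p * cnj (v q))"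
    using assms(4) unfolding outer_sum_def by blast
  define s where "s = complex_of_real (sqrt (Re (A $$ (i,i))))"
  have "s * s = A $$ (i,i)" "cnj s = s"
    using psd_diag_nonneg[OF assms(1,2)]
    by (auto simp: s_def less_eq_complex_def complex_eq_iff)
  define v where "v p = A $$ (p,i) / s" for p
  have "A $$ (p,q) = (\<Sum>u\<leftarrow>v # vs. u p * cnj (u q))" if "p < n" "q < n" for p q
    using vs[OF that] that psd_hermitian[OF assms(1) that(2) assms(2)] \<open>s * s = A $$ (i,i)\<close> \<open>cnj s = s\<close>
    by (simp add: v_def schur_compl_def diff_eq_eq add.commute)
  then show ?thesis
    using assms(1) unfolding outer_sum_def psd_def by blast
qed

lemma psd_imp_outer_sum: "psd n A \<Longrightarrow> outer_sum n A"
proof (induction "card {k. k < n \<and> A $$ (k,k) \<noteq> 0}" arbitrary: A rule: less_induct)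
  case less
  show ?case
  proof (cases "\<exists>i<n. A $$ (i,i) \<noteq> 0")
    case True
    then obtain i where i: "i < n" "A $$ (i,i) \<noteq> 0"
      by blast
    have "card {k. k < n \<and> schur_compl n A i $$ (k,k) \<noteq> 0} < card {k. k < n \<and> A $$ (k,k) \<noteq> 0}"
      using i by (intro psubset_card_mono) (use schur_compl_diag_support[OF less.prems i] in auto)
    then have "outer_sum n (schur_compl n A i)"
      using less.hyps psd_schur_compl[OF less.prems i] by blast
    then show ?thesis
      using outer_sum_from_schur_compl[OF less.prems i] by blast
  next
    case False
    then have "A $$ (p,q) = (\<Sum>v\<leftarrow>[]. v p * cnj (v q))" if "p < n" "q < n" for p q
      using that psd_zero_diag_imp_zero_row[OF less.prems that] by simp
    then show ?thesis
      using less.prems unfolding outer_sum_def psd_def by blast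
  qed
qed

lemma sum_list_concat_map: "(\<Sum>x\<leftarrow>concat xss. f x) = (\<Sum>xs\<leftarrow>xss. \<Sum>x\<leftarrow>xs. f x)"
  by (induction xss) auto

lemma sum_list_product:
  fixes f :: "'a \<Rightarrow> 'c::semiring_0"
  shows "(\<Sum>x\<leftarrow>xs. f x) * (\<Sum>y\<leftarrow>ys. g y) = (\<Sum>x\<leftarrow>xs. \<Sum>y\<leftarrow>ys. f x * g y)"
  by (induction xs) (simp_all add: distrib_right sum_list_const_mult)

lemma sum_sum_list_comm: "(\<Sum>x\<in>X. \<Sum>y\<leftarrow>ys. f x y) = (\<Sum>y\<leftarrow>ys. \<Sum>x\<in>X. f x y)"
  by (induction ys) (simp_all add: sum.distrib)

lemma index_kron:
  assumes "A \<in> carrier_mat n1 m1" "B \<in> carrier_mat n2 m2" "i < n1 * n2" "j < m1 * m2"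
  shows "kron A B $$ (i,j) = A $$ (i div n2, j div m2) * B $$ (i mod n2, j mod m2)"
  using assms unfolding kron_def by simp

lemma kron_carrier_mat:
  "A \<in> carrier_mat n1 m1 \<Longrightarrow> B \<in> carrier_mat n2 m2 \<Longrightarrow> kron A B \<in> carrier_mat (n1 * n2) (m1 * m2)"
  unfolding kron_def by auto

lemma outer_sum_kron:
  assumes "outer_sum n1 A" "outer_sum n2 B"
  shows "outer_sum (n1 * n2) (kron A B)"
proof -
  obtain us where A: "A \<in> carrier_mat n1 n1"
    and us: "\<And>i j. i < n1 \<Longrightarrow> j < n1 \<Longrightarrow> A $$ (i,j) = (\<Sum>u\<leftarrow>us. u i * cnj (u j))"
    using assms(1) unfolding outer_sum_def by blast
  obtain ws where B: "B \<in> carrier_mat n2 n2"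
    and ws: "\<And>i j. i < n2 \<Longrightarrow> j < n2 \<Longrightarrow> B $$ (i,j) = (\<Sum>w\<leftarrow>ws. w i * cnj (w j))"
    using assms(2) unfolding outer_sum_def by blast
  have "kron A B $$ (i,j) = (\<Sum>v\<leftarrow>[\<lambda>k. u (k div n2) * w (k mod n2). u \<leftarrow> us, w \<leftarrow> ws]. v i * cnj (v j))"
    if "i < n1 * n2" "j < n1 * n2" for i j
  proof -
    have "n2 > 0"
      using that by (cases n2) auto
    then have "i div n2 < n1" "j div n2 < n1" "i mod n2 < n2" "j mod n2 < n2"
      using that by (auto simp: less_mult_imp_div_less)
    then show ?thesis
      using that by (simp add: index_kron[OF A B] us ws sum_list_product sum_list_concat_map
          o_def mult_ac)
  qed
  then show ?thesis
    unfolding outer_sum_def using kron_carrier_mat[OF A B] by blast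
qed

lemma index_mult_mult_adj:
  assumes "K \<in> carrier_mat d n" "M \<in> carrier_mat n n" "i < d" "j < d"
  shows "(K * M * adj K) $$ (i,j) = (\<Sum>p<n. \<Sum>q<n. K $$ (i,p) * M $$ (p,q) * cnj (K $$ (j,q)))"
  using assms unfolding adj_def scalar_prod_def
  by (subst sum.swap) (auto simp: scalar_prod_def atLeast0LessThan sum_distrib_right intro!: sum.cong)

lemma outer_sum_qapply:
  assumes "\<forall>K\<in>set Ks. K \<in> carrier_mat d n" "outer_sum n M"
  shows "outer_sum d (qapply d Ks M)"
proof -
  obtain vs where M: "M \<in> carrier_mat n n"
    and vs: "\<And>p q. p < n \<Longrightarrow> q < n \<Longrightarrow> M $$ (p,q) = (\<Sum>v\<leftarrow>vs. v p * cnj (v q))"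
    using assms(2) unfolding outer_sum_def by blast
  have "(K * M * adj K) $$ (i,j)
      = (\<Sum>v\<leftarrow>vs. (\<Sum>p<n. K $$ (i,p) * v p) * cnj (\<Sum>q<n. K $$ (j,q) * v q))"
    if "K \<in> carrier_mat d n" "i < d" "j < d" for K i j
    using that
    by (simp add: index_mult_mult_adj[OF _ M] vs sum_list_const_mult[symmetric]
        sum_list_mult_const[symmetric] sum_sum_list_comm sum_product cnj_sum mult_ac)
  then have "qapply d Ks M $$ (i,j)
      = (\<Sum>v\<leftarrow>[\<lambda>k. \<Sum>p<n. K $$ (k,p) * v p. K \<leftarrow> Ks, v \<leftarrow> vs]. v i * cnj (v j))"
    if "i < d" "j < d" for i j
    using that assms(1) by (simp add: qapply_def sum_list_concat_map o_def cong: map_cong)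
  then show ?thesis
    unfolding outer_sum_def qapply_def by auto
qed

lemma mtrace_mult:
  assumes "A \<in> carrier_mat n n" "B \<in> carrier_mat n n"
  shows "mtrace (A * B) = (\<Sum>i<n. \<Sum>j<n. A $$ (i,j) * B $$ (j,i))"
  using assms unfolding mtrace_def scalar_prod_def
  by (auto simp: scalar_prod_def atLeast0LessThan intro!: sum.cong)

lemma outer_sum_mtrace_nonneg:
  assumes "outer_sum n A" "psd n R"
  shows "0 \<le> mtrace (A * R)"
proof -
  obtain vs where A: "A \<in> carrier_mat n n"
    and vs: "\<And>i j. i < n \<Longrightarrow> j < n \<Longrightarrow> A $$ (i,j) = (\<Sum>v\<leftarrow>vs. v i * cnj (v j))"
    using assms(1) unfolding outer_sum_def by blast
  have "qform R n v = (\<Sum>i<n. \<Sum>j<n. v i * cnj (v j) * R $$ (j,i))" for v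
    unfolding qform_def by (subst sum.swap) (simp add: mult_ac)
  then have "mtrace (A * R) = (\<Sum>v\<leftarrow>vs. qform R n v)"
    using assms(2) unfolding psd_def
    by (simp add: mtrace_mult[OF A] vs sum_list_mult_const[symmetric] sum_sum_list_comm)
  also have "\<dots> \<ge> 0"
    using assms(2) by (intro sum_list_nonneg) (auto simp: psd_iff_qform)
  finally show ?thesis .
qed

section \<open>Sums of matrices over index sets\<close>

lemma msum_reindex:
  assumes "bij_betw h I J"
  shows "msum n m (\<lambda>x. f (h x)) I = msum n m f J"
proof -
  have "(\<Sum>x\<in>I. f (h x) $$ ij) = (\<Sum>x\<in>J. f x $$ ij)" for ij
    using sum.reindex_bij_betw[OF assms, of "\<lambda>x. f x $$ ij"] .
  then show ?thesis
    by (simp add: msum_def)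
qed

lemma msum_kron:
  assumes "\<And>x. x \<in> X \<Longrightarrow> F x \<in> carrier_mat n1 m1" "\<And>y. y \<in> Y \<Longrightarrow> G y \<in> carrier_mat n2 m2"
  shows "msum (n1 * n2) (m1 * m2) (\<lambda>(x,y). kron (F x) (G y)) (X \<times> Y)
     = kron (msum n1 m1 F X) (msum n2 m2 G Y)"
proof (rule eq_matI)
  fix i j assume "i < dim_row (kron (msum n1 m1 F X) (msum n2 m2 G Y))"
    "j < dim_col (kron (msum n1 m1 F X) (msum n2 m2 G Y))"
  then have "i < n1 * n2" "j < m1 * m2"
    by (simp_all add: kron_def msum_def)
  moreover from this have "n2 > 0" "m2 > 0"
    by (cases n2; cases m2; simp)+
  ultimately have "i div n2 < n1" "j div m2 < m1" "i mod n2 < n2" "j mod m2 < m2"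
    by (auto simp: less_mult_imp_div_less)
  note index = index_kron[OF _ _ \<open>i < n1 * n2\<close> \<open>j < m1 * m2\<close>]
  have "msum (n1 * n2) (m1 * m2) (\<lambda>(x,y). kron (F x) (G y)) (X \<times> Y) $$ (i,j)
      = (\<Sum>p\<in>X \<times> Y. F (fst p) $$ (i div n2, j div m2) * G (snd p) $$ (i mod n2, j mod m2))"
    using \<open>i < n1 * n2\<close> \<open>j < m1 * m2\<close>
    by (auto simp: msum_def split_def index assms intro!: sum.cong)
  also have "\<dots> = kron (msum n1 m1 F X) (msum n2 m2 G Y) $$ (i,j)"
    using \<open>i div n2 < n1\<close> \<open>j div m2 < m1\<close> \<open>i mod n2 < n2\<close> \<open>j mod m2 < m2\<close>
    by (simp add: index msum_def sum_product sum.cartesian_product split_def)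
  finally show "msum (n1 * n2) (m1 * m2) (\<lambda>(x,y). kron (F x) (G y)) (X \<times> Y) $$ (i,j)
      = kron (msum n1 m1 F X) (msum n2 m2 G Y) $$ (i,j)" .
qed (simp_all add: kron_def msum_def)

lemma msum_qapply:
  assumes "\<forall>K\<in>set Ks. K \<in> carrier_mat d n" "\<And>x. x \<in> X \<Longrightarrow> F x \<in> carrier_mat n n"
  shows "msum d d (\<lambda>x. qapply d Ks (F x)) X = qapply d Ks (msum n n F X)"
proof (rule eq_matI)
  fix i j assume "i < dim_row (qapply d Ks (msum n n F X))" "j < dim_col (qapply d Ks (msum n n F X))"
  then have "i < d" "j < d"
    by (simp_all add: qapply_def)
  have "(K * msum n n F X * adj K) $$ (i,j) = (\<Sum>x\<in>X. (K * F x * adj K) $$ (i,j))"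
    if "K \<in> carrier_mat d n" for K
  proof -
    have "(\<Sum>x\<in>X. (K * F x * adj K) $$ (i,j))
        = (\<Sum>x\<in>X. \<Sum>p<n. \<Sum>q<n. K $$ (i,p) * F x $$ (p,q) * cnj (K $$ (j,q)))"
      using that assms(2) \<open>i < d\<close> \<open>j < d\<close> by (intro sum.cong refl index_mult_mult_adj)
    then show ?thesis
      using that \<open>i < d\<close> \<open>j < d\<close>
      by (simp add: index_mult_mult_adj[of _ d n] msum_def sum_distrib_left sum_distrib_right
          sum.swap[of _ X])
  qed
  then show "msum d d (\<lambda>x. qapply d Ks (F x)) X $$ (i,j) = qapply d Ks (msum n n F X) $$ (i,j)"
    using assms(1) \<open>i < d\<close> \<open>j < d\<close>
    by (simp add: msum_def qapply_def sum_sum_list_comm cong: map_cong)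
qed (simp_all add: qapply_def msum_def)

lemma kron_one_mat: "kron (1\<^sub>m n1) (1\<^sub>m n2) = 1\<^sub>m (n1 * n2)"
proof (rule eq_matI)
  fix i j assume "i < dim_row (1\<^sub>m (n1 * n2))" "j < dim_col (1\<^sub>m (n1 * n2))"
  then have "i < n1 * n2" "j < n1 * n2"
    by simp_all
  moreover from this have "n2 > 0"
    by (cases n2) simp_all
  ultimately show "kron (1\<^sub>m n1) (1\<^sub>m n2) $$ (i,j) = 1\<^sub>m (n1 * n2) $$ (i,j)"
    by (simp add: index_kron[of _ n1 n1 _ n2 n2] less_mult_imp_div_less)
      (metis div_mult_mod_eq)
qed (simp_all add: kron_def)

lemma mtrace_msum_mult:
  assumes "\<And>x. x \<in> X \<Longrightarrow> F x \<in> carrier_mat n n" "R \<in> carrier_mat n n"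
  shows "(\<Sum>x\<in>X. mtrace (F x * R)) = mtrace (msum n n F X * R)"
proof -
  have "(\<Sum>x\<in>X. mtrace (F x * R)) = (\<Sum>x\<in>X. \<Sum>i<n. \<Sum>j<n. F x $$ (i,j) * R $$ (j,i))"
    using assms by (intro sum.cong refl mtrace_mult)
  then show ?thesis
    using assms(2) by (simp add: mtrace_mult[OF _ assms(2)] msum_def sum_distrib_right sum.swap[of _ X])
qed

lemma bij_betw_restrict_PiE_Un:
  assumes "A \<inter> B = {}"
  shows "bij_betw (\<lambda>x. (restrict x A, restrict x B)) (PiE (A \<union> B) S) (PiE A S \<times> PiE B S)"
proof (rule bij_betw_byWitness[where f' = "\<lambda>(y,z) k. if k \<in> A then y k else z k"])
  show "\<forall>x\<in>PiE (A \<union> B) S. (\<lambda>(y,z) k. if k \<in> A then y k else z k) (restrict x A, restrict x B) = x"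
    by (auto simp: fun_eq_iff PiE_iff extensional_def)
  show "\<forall>p\<in>PiE A S \<times> PiE B S. (\<lambda>x. (restrict x A, restrict x B)) ((\<lambda>(y,z) k. if k \<in> A then y k else z k) p) = p"
    using assms by (auto simp: fun_eq_iff PiE_iff extensional_def)
qed (auto simp: PiE_iff extensional_def)

lemma bij_betw_PiE_singleton: "bij_betw (\<lambda>x. x k) (PiE {k} S) (S k)"
  by (rule bij_betw_byWitness[where f' = "\<lambda>v. \<lambda>j\<in>{k}. v"])
    (auto simp: fun_eq_iff PiE_iff extensional_def split: if_split_asm)

section \<open>Circuits\<close>

lemma ceval_cong: "(\<And>k. k \<in> set (leaves C) \<Longrightarrow> x k = y k) \<Longrightarrow> ceval C x = ceval C y"
  by (induction C) auto

lemma ceval_carrier: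
  "pos_unital \<Omega> C \<Longrightarrow> (\<And>k. k \<in> set (leaves C) \<Longrightarrow> x k \<in> \<Omega> k)
    \<Longrightarrow> ceval C x \<in> carrier_mat (cdim C) (cdim C)"
  by (induction C) (auto simp: povm_def psd_def qapply_def)

lemma ceval_outer_sum:
  "pos_unital \<Omega> C \<Longrightarrow> (\<And>k. k \<in> set (leaves C) \<Longrightarrow> x k \<in> \<Omega> k)
    \<Longrightarrow> outer_sum (cdim C) (ceval C x)"
proof (induction C)
  case (CLeaf k d E)
  then show ?case
    by (simp add: povm_def psd_imp_outer_sum)
next
  case (CNode d Ks l r)
  then show ?case
    by (auto simp: unital_qop_def qop_def intro!: outer_sum_qapply outer_sum_kron)
qed

lemma ceval_msum:
  "pos_unital \<Omega> C \<Longrightarrow> distinct (leaves C)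
    \<Longrightarrow> msum (cdim C) (cdim C) (ceval C) (PiE (set (leaves C)) \<Omega>) = 1\<^sub>m (cdim C)"
proof (induction C)
  case (CLeaf k d E)
  then show ?case
    using msum_reindex[OF bij_betw_PiE_singleton, of d d E k \<Omega>] by (simp add: povm_def)
next
  case (CNode d Ks l r)
  let ?L1 = "set (leaves l)" and ?L2 = "set (leaves r)" and ?n = "cdim l * cdim r"
  have l: "pos_unital \<Omega> l" and r: "pos_unital \<Omega> r" and Ks: "unital_qop ?n d Ks"
    and disj: "?L1 \<inter> ?L2 = {}"
    using CNode.prems by auto
  have Ks_carrier: "\<forall>K\<in>set Ks. K \<in> carrier_mat d ?n" and "qapply d Ks (1\<^sub>m ?n) = 1\<^sub>m d"
    using Ks by (simp_all add: unital_qop_def qop_def)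
  have carrier_l: "ceval l x \<in> carrier_mat (cdim l) (cdim l)" if "x \<in> PiE ?L1 \<Omega>" for x
    using ceval_carrier[OF l] that by (auto simp: PiE_iff)
  have carrier_r: "ceval r x \<in> carrier_mat (cdim r) (cdim r)" if "x \<in> PiE ?L2 \<Omega>" for x
    using ceval_carrier[OF r] that by (auto simp: PiE_iff)
  have carrier_kron: "kron (ceval l x) (ceval r x) \<in> carrier_mat ?n ?n"
    if "x \<in> PiE (?L1 \<union> ?L2) \<Omega>" for x
    using ceval_carrier[OF l, of x] ceval_carrier[OF r, of x] that
    by (intro kron_carrier_mat) (auto simp: PiE_iff)
  have eval: "ceval (CNode d Ks l r) = (\<lambda>x. qapply d Ks (kron (ceval l x) (ceval r x)))"
    by (simp add: fun_eq_iff)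
  have restrict_split: "kron (ceval l x) (ceval r x)
      = (\<lambda>(y,z). kron (ceval l y) (ceval r z)) (restrict x ?L1, restrict x ?L2)" for x
    using ceval_cong[of l x "restrict x ?L1"] ceval_cong[of r x "restrict x ?L2"] by simp
  have "msum d d (ceval (CNode d Ks l r)) (PiE (set (leaves (CNode d Ks l r))) \<Omega>)
      = qapply d Ks (msum ?n ?n (\<lambda>x. kron (ceval l x) (ceval r x)) (PiE (?L1 \<union> ?L2) \<Omega>))"
    unfolding eval by (simp, intro msum_qapply[OF Ks_carrier] carrier_kron)
  also have "msum ?n ?n (\<lambda>x. kron (ceval l x) (ceval r x)) (PiE (?L1 \<union> ?L2) \<Omega>)
      = kron (msum (cdim l) (cdim l) (ceval l) (PiE ?L1 \<Omega>)) (msum (cdim r) (cdim r) (ceval r) (PiE ?L2 \<Omega>))"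
    unfolding restrict_split msum_reindex[OF bij_betw_restrict_PiE_Un[OF disj]]
    using carrier_l carrier_r by (rule msum_kron)
  also have "\<dots> = 1\<^sub>m ?n"
    using CNode by (simp add: kron_one_mat)
  finally show ?case
    using \<open>qapply d Ks (1\<^sub>m ?n) = 1\<^sub>m d\<close> by simp
qed

theorem theorem2:
  fixes N :: nat and \<Omega> :: "nat \<Rightarrow> nat set" and C :: circ and \<rho> :: "complex mat"
  assumes "\<And>k. k < N \<Longrightarrow> finite (\<Omega> k)"
    and "partition_circ N C"
    and "pos_unital \<Omega> C"
    and "density (cdim C) \<rho>"
  shows "(\<forall>x \<in> PiE {..<N} \<Omega>. 0 \<le> mtrace (ceval C x * \<rho>))
       \<and> (\<Sum>x \<in> PiE {..<N} \<Omega>. mtrace (ceval C x * \<rho>)) = 1"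
proof -
  let ?n = "cdim C" and ?X = "PiE {..<N} \<Omega>"
  have leaves: "set (leaves C) = {..<N}" "distinct (leaves C)"
    using assms(2) unfolding partition_circ_def by auto
  have \<rho>: "psd ?n \<rho>" "mtrace \<rho> = 1" "\<rho> \<in> carrier_mat ?n ?n"
    using assms(4) unfolding density_def psd_def by auto
  have in_sample_space: "x k \<in> \<Omega> k" if "x \<in> ?X" "k \<in> set (leaves C)" for x k
    using that leaves(1) by (auto simp: PiE_iff)
  have "\<forall>x\<in>?X. 0 \<le> mtrace (ceval C x * \<rho>)"
    using outer_sum_mtrace_nonneg[OF ceval_outer_sum[OF assms(3)] \<rho>(1)] in_sample_space by blast
  moreover
  have "(\<Sum>x\<in>?X. mtrace (ceval C x * \<rho>)) = mtrace (msum ?n ?n (ceval C) ?X * \<rho>)"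
    using ceval_carrier[OF assms(3)] in_sample_space by (intro mtrace_msum_mult \<rho>(3)) blast
  then have "(\<Sum>x\<in>?X. mtrace (ceval C x * \<rho>)) = 1"
    using ceval_msum[OF assms(3) leaves(2)] leaves(1) \<rho> by simp
  ultimately show ?thesis
    by blast
qed

end
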